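(* For every natural number $k\ge 2$, the class $\mathcal{H}_k$ is closed under taking minors: if $H\in\mathcal{H}_k$ and $G$ is a minor of $H$, then $G\in\mathcal{H}_k$.
   Context: All graphs are finite; parallel edges are allowed, loops are not. A length-function on a graph $G$ is a map $\ell:E(G)\to\mathbb{R}^+$ (strictly positive reals); $\ell(H)=\sum_{e\in E(H)}\ell(e)$ for subgraphs $H$, which carry the restricted length-function. $\mathrm{sd}_G(A)$ is the minimum of $\ell(S)$ over connected subgraphs $S\subseteq G$ with $A\subseteq V(S)$ ($\infty$ if none). $H\subseteq G$ is $k$-geodesic in $G$ if $\mathrm{sd}_H(A)=\mathrm{sd}_G(A)$ for all $A\subseteq V(H)$ with $|A|\le k$, and fully geodesic if it is $k$-geodesic for all $k$. For $k\ge2$, $\mathcal{H}_k$ is the class of all graphs $H$ such that for every graph $G\supseteq H$ and every length-function on $G$ for which $H$ is $k$-geodesic in $G$, $H$ is fully geodesic in $G$. *)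

theory Defs
  imports Complex_Main "HOL-Library.Extended_Real"
begin

text \<open>Finite multigraphs (parallel edges allowed, no loops). A graph is given by a
vertex set, an edge set and a map assigning to each edge its set of two end-vertices.\<close>

record ('v, 'e) mgraph =
  verts :: "'v set"
  edges :: "'e set"
  ends  :: "'e \<Rightarrow> 'v set"

definition graph :: "('v, 'e) mgraph \<Rightarrow> bool" where
  "graph G \<longleftrightarrow> finite (verts G) \<and> finite (edges G) \<and>
     (\<forall>e\<in>edges G. ends G e \<subseteq> verts G \<and> card (ends G e) = 2)"

definition subgraph :: "('v, 'e) mgraph \<Rightarrow> ('v, 'e) mgraph \<Rightarrow> bool" where
  "subgraph S G \<longleftrightarrow> graph S \<and> verts S \<subseteq> verts G \<and> edges S \<subseteq> edges G \<and>
     (\<forall>e\<in>edges S. ends S e = ends G e)"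

definition adj :: "('v, 'e) mgraph \<Rightarrow> 'v \<Rightarrow> 'v \<Rightarrow> bool" where
  "adj G u v \<longleftrightarrow> (\<exists>e\<in>edges G. ends G e = {u, v})"

definition connected_graph :: "('v, 'e) mgraph \<Rightarrow> bool" where
  "connected_graph G \<longleftrightarrow> (\<forall>u\<in>verts G. \<forall>v\<in>verts G. (adj G)\<^sup>*\<^sup>* u v)"

definition induced :: "('v, 'e) mgraph \<Rightarrow> 'v set \<Rightarrow> ('v, 'e) mgraph" where
  "induced G B = \<lparr>verts = B, edges = {e \<in> edges G. ends G e \<subseteq> B}, ends = ends G\<rparr>"

definition glength :: "('e \<Rightarrow> real) \<Rightarrow> ('v, 'e) mgraph \<Rightarrow> real" where
  "glength l S = (\<Sum>e\<in>edges S. l e)"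

text \<open>Steiner distance; the infimum of the empty set in ereal is \<infinity>.\<close>
definition sd :: "('v, 'e) mgraph \<Rightarrow> ('e \<Rightarrow> real) \<Rightarrow> 'v set \<Rightarrow> ereal" where
  "sd G l A = Inf {ereal (glength l S) | S. subgraph S G \<and> connected_graph S \<and> A \<subseteq> verts S}"

definition length_function :: "('v, 'e) mgraph \<Rightarrow> ('e \<Rightarrow> real) \<Rightarrow> bool" where
  "length_function G l \<longleftrightarrow> (\<forall>e\<in>edges G. l e > 0)"

definition k_geodesic :: "nat \<Rightarrow> ('v, 'e) mgraph \<Rightarrow> ('e \<Rightarrow> real) \<Rightarrow> ('v, 'e) mgraph \<Rightarrow> bool" where
  "k_geodesic k G l H \<longleftrightarrow> (\<forall>A. A \<subseteq> verts H \<and> card A \<le> k \<longrightarrow> sd H l A = sd G l A)"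

definition fully_geodesic :: "('v, 'e) mgraph \<Rightarrow> ('e \<Rightarrow> real) \<Rightarrow> ('v, 'e) mgraph \<Rightarrow> bool" where
  "fully_geodesic G l H \<longleftrightarrow> (\<forall>k. k_geodesic k G l H)"

text \<open>The class H_k. Graphs are labelled by natural numbers (vertices and edges), so that
every finite graph has an isomorphic copy and every finite supergraph can be realised.\<close>
definition in_H :: "nat \<Rightarrow> (nat, nat) mgraph \<Rightarrow> bool" where
  "in_H k H \<longleftrightarrow> graph H \<and>
     (\<forall>G l. graph G \<and> subgraph H G \<and> length_function G l \<and> k_geodesic k G l H
        \<longrightarrow> fully_geodesic G l H)"

text \<open>G is a minor of H (up to isomorphism): there are disjoint nonempty connected branch
sets B v in H for the vertices v of G, and an injective assignment of the edges of G to
edges of H joining the corresponding branch sets.\<close>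
definition minor :: "('v, 'e) mgraph \<Rightarrow> ('w, 'f) mgraph \<Rightarrow> bool" where
  "minor G H \<longleftrightarrow> graph G \<and> graph H \<and>
     (\<exists>(B :: 'v \<Rightarrow> 'w set) (f :: 'e \<Rightarrow> 'f).
        (\<forall>v\<in>verts G. B v \<noteq> {} \<and> B v \<subseteq> verts H \<and> connected_graph (induced H (B v))) \<and>
        (\<forall>u\<in>verts G. \<forall>v\<in>verts G. u \<noteq> v \<longrightarrow> B u \<inter> B v = {}) \<and>
        inj_on f (edges G) \<and>
        (\<forall>e\<in>edges G. f e \<in> edges H \<and>
           (\<exists>u v a b. ends G e = {u, v} \<and> ends H (f e) = {a, b} \<and> a \<in> B u \<and> b \<in> B v)))"

end

theory Submission
  imports Defs
begin

text \<open>Let B be a model of G in H and let G be k-geodesic in G' \<supseteq> G. For A \<subseteq> V(G)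
  and an optimal connected subgraph T of G' containing A we need a connected subgraph of G
  containing A that is no longer than T. Grow the branch sets until they partition the
  component of H that contains them, and let H' be H with a copy of the part of G' outside G
  attached, each vertex of G being identified with a representative in its branch set. An edge
  of H joining the cells of u and v gets length sd_G {u, v} + \<delta>; a new edge gets its length
  in G' plus a surcharge \<Delta> = O(\<delta>) that exceeds the total cost of lifting a subgraph of G
  to H. Then H is k-geodesic in H': a connected subgraph of H' using a new edge projects to G'
  saving at least \<Delta>, by k-geodesicity of G its projection may be taken inside G, and lifting
  it back to H costs at most \<Delta>. As H \<in> H_k, H is fully geodesic in H', so
  sd_G A \<le> sd_H (rep A) = sd_H' (rep A) \<le> \<ell>(T) + O(\<delta>), and \<delta> \<rightarrow> 0 gives the claim.\<close>

section \<open>Connected subgraphs and Steiner distance\<close>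

text \<open>A connected subgraph of G is described by its vertex and edge sets; the ends are those in G.\<close>

definition restrict_to :: "('v, 'e) mgraph \<Rightarrow> 'v set \<Rightarrow> 'e set \<Rightarrow> ('v, 'e) mgraph" where
  "restrict_to G V E = \<lparr>verts = V, edges = E, ends = ends G\<rparr>"

definition connected_in :: "('v, 'e) mgraph \<Rightarrow> 'v set \<Rightarrow> 'e set \<Rightarrow> bool" where
  "connected_in G V E \<longleftrightarrow> V \<subseteq> verts G \<and> E \<subseteq> edges G \<and> (\<forall>e\<in>E. ends G e \<subseteq> V) \<and>
     (\<forall>u\<in>V. \<forall>w\<in>V. (adj (restrict_to G V E))\<^sup>*\<^sup>* u w)"

definition adj_closed :: "('v, 'e) mgraph \<Rightarrow> 'v set \<Rightarrow> bool" where
  "adj_closed G X \<longleftrightarrow> (\<forall>u w. u \<in> X \<longrightarrow> adj G u w \<longrightarrow> w \<in> X)"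

lemma restrict_to_simps [simp]:
  "verts (restrict_to G V E) = V" "edges (restrict_to G V E) = E" "ends (restrict_to G V E) = ends G"
  by (simp_all add: restrict_to_def)

lemma adj_restrict_to: "adj (restrict_to G V E) u w \<longleftrightarrow> (\<exists>e\<in>E. ends G e = {u, w})"
  by (simp add: adj_def)

lemma adj_sym: "adj G u w \<Longrightarrow> adj G w u"
  unfolding adj_def by (auto simp: insert_commute)

lemma rtranclp_adj_sym: "(adj G)\<^sup>*\<^sup>* u w \<Longrightarrow> (adj G)\<^sup>*\<^sup>* w u"
  by (induction rule: rtranclp_induct) (auto intro: converse_rtranclp_into_rtranclp adj_sym)

lemma rtranclp_adj_mono:
  assumes "\<And>u w. adj G u w \<Longrightarrow> adj G2 u w" "(adj G)\<^sup>*\<^sup>* u w"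
  shows "(adj G2)\<^sup>*\<^sup>* u w"
  using rtranclp_mono[of "adj G" "adj G2"] assms by (auto simp: le_fun_def)

lemma rtranclp_adj_restrict_to_mono:
  "E \<subseteq> E2 \<Longrightarrow> (adj (restrict_to G V E))\<^sup>*\<^sup>* u w \<Longrightarrow> (adj (restrict_to G V2 E2))\<^sup>*\<^sup>* u w"
  by (erule rtranclp_adj_mono[rotated]) (auto simp: adj_restrict_to)

lemma rtranclp_adj_restrict_to:
  "E \<subseteq> edges G \<Longrightarrow> (adj (restrict_to G V E))\<^sup>*\<^sup>* u w \<Longrightarrow> (adj G)\<^sup>*\<^sup>* u w"
  by (erule rtranclp_adj_mono[rotated]) (auto simp: adj_restrict_to adj_def)

lemma rtranclp_adj_induced: "(adj (induced G S))\<^sup>*\<^sup>* u w \<Longrightarrow> (adj G)\<^sup>*\<^sup>* u w"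
  by (erule rtranclp_adj_mono[rotated]) (auto simp: adj_def induced_def)

lemma rtranclp_exits:
  assumes "R\<^sup>*\<^sup>* a b" "a \<in> U" "b \<notin> U"
  obtains c d where "c \<in> U" "d \<notin> U" "R c d"
  using assms by (induction rule: rtranclp_induct) auto

lemma rtranclp_of_connected_induced:
  "connected_graph (induced H S) \<Longrightarrow> x \<in> S \<Longrightarrow> y \<in> S \<Longrightarrow> (adj H)\<^sup>*\<^sup>* x y"
  unfolding connected_graph_def by (rule rtranclp_adj_induced[of H S]) (simp add: induced_def)

lemma adj_verts: "graph G \<Longrightarrow> adj G u w \<Longrightarrow> u \<in> verts G \<and> w \<in> verts G"
  unfolding graph_def adj_def by blast

lemma rtranclp_adj_verts: "graph G \<Longrightarrow> x \<in> verts G \<Longrightarrow> (adj G)\<^sup>*\<^sup>* x y \<Longrightarrow> y \<in> verts G"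
  by (erule rtranclp_induct) (auto dest: adj_verts)

lemma ends_eq_doubleton:
  assumes "graph G" "g \<in> edges G"
  obtains a b where "ends G g = {a, b}" "a \<noteq> b"
  using assms unfolding graph_def by (meson card_2_iff)

lemma adj_closed_component: "adj_closed G {y. (adj G)\<^sup>*\<^sup>* x y}"
  unfolding adj_closed_def by (auto intro: rtranclp.rtrancl_into_rtrancl)

lemma connected_in_rtranclp: "connected_in G V E \<Longrightarrow> u \<in> V \<Longrightarrow> w \<in> V \<Longrightarrow> (adj G)\<^sup>*\<^sup>* u w"
  unfolding connected_in_def by (meson rtranclp_adj_restrict_to)

lemma connected_in_finite: "graph G \<Longrightarrow> connected_in G V E \<Longrightarrow> finite V \<and> finite E"
  unfolding graph_def connected_in_def by (meson finite_subset)

lemma connected_in_subgraph: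
  "graph G \<Longrightarrow> connected_in G V E \<Longrightarrow> subgraph (restrict_to G V E) G \<and> connected_graph (restrict_to G V E)"
  using connected_in_finite[of G V E]
  by (auto simp: subgraph_def connected_graph_def connected_in_def graph_def)

lemma connected_in_of_subgraph:
  assumes "subgraph S G" "connected_graph S"
  shows "connected_in G (verts S) (edges S)"
proof -
  have "adj (restrict_to G (verts S) (edges S)) = adj S"
    using assms(1) unfolding subgraph_def by (auto simp: adj_def fun_eq_iff)
  moreover have "\<forall>e\<in>edges S. ends G e \<subseteq> verts S"
    using assms(1) unfolding subgraph_def graph_def by blast
  moreover have "verts S \<subseteq> verts G" "edges S \<subseteq> edges G" using assms(1) by (auto simp: subgraph_def)
  ultimately show ?thesis using assms(2) unfolding connected_in_def connected_graph_def by auto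
qed

lemma connected_in_cong:
  assumes "connected_in G V E" "V \<subseteq> verts G2" "E \<subseteq> edges G2" "\<forall>e\<in>E. ends G2 e = ends G e"
  shows "connected_in G2 V E"
proof -
  have "adj (restrict_to G2 V E) = adj (restrict_to G V E)"
    using assms(4) by (auto simp: adj_restrict_to fun_eq_iff)
  then show ?thesis using assms unfolding connected_in_def by auto
qed

lemma connected_in_supergraph: "subgraph G G2 \<Longrightarrow> connected_in G V E \<Longrightarrow> connected_in G2 V E"
  by (rule connected_in_cong) (auto simp: subgraph_def connected_in_def)

lemma connected_in_subgraph_of_edges:
  assumes "connected_in K' V E" "subgraph K K'" "E \<subseteq> edges K" "a \<in> V" "a \<in> verts K"
  shows "connected_in K V E"
proof -
  have ends: "\<forall>g\<in>E. ends K g = ends K' g" using assms(2,3) unfolding subgraph_def by blast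
  have "V \<subseteq> verts K"
  proof
    fix x assume x: "x \<in> V"
    show "x \<in> verts K"
    proof (cases "x = a")
      case False
      have "(adj (restrict_to K' V E))\<^sup>*\<^sup>* x a" using assms(1,4) x unfolding connected_in_def by blast
      then obtain y where "adj (restrict_to K' V E) x y" using False by (metis converse_rtranclpE)
      then obtain g where g: "g \<in> E" "ends K' g = {x, y}" by (auto simp: adj_restrict_to)
      then have "x \<in> ends K g" using ends by simp
      moreover have "g \<in> edges K" using g(1) assms(3) by blast
      moreover have "graph K" using assms(2) unfolding subgraph_def by blast
      ultimately show ?thesis unfolding graph_def by blast
    qed (use assms(5) in simp)
  qed
  then show ?thesis using connected_in_cong[OF assms(1) _ assms(3) ends] by blast
qed

lemma connected_in_empty: "connected_in G {} {}"
  by (simp add: connected_in_def)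

lemma connected_in_singleton: "v \<in> verts G \<Longrightarrow> connected_in G {v} {}"
  by (simp add: connected_in_def)

lemma connected_in_edge:
  assumes "graph G" "e \<in> edges G"
  shows "connected_in G (ends G e) {e}"
proof -
  obtain a b where ab: "ends G e = {a, b}" using ends_eq_doubleton assms .
  then have "(adj (restrict_to G (ends G e) {e}))\<^sup>*\<^sup>* a b" by (auto simp: adj_restrict_to)
  then show ?thesis
    using rtranclp_adj_sym assms ab unfolding connected_in_def graph_def by auto
qed

lemma connected_in_Un:
  assumes "connected_in G V1 E1" "connected_in G V2 E2" "x \<in> V1" "x \<in> V2"
  shows "connected_in G (V1 \<union> V2) (E1 \<union> E2)"
proof -
  let ?R = "(adj (restrict_to G (V1 \<union> V2) (E1 \<union> E2)))\<^sup>*\<^sup>*"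
  have lift: "?R u w" if "connected_in G V E" "E \<subseteq> E1 \<union> E2" "u \<in> V" "w \<in> V" for V E u w
  proof -
    have "(adj (restrict_to G V E))\<^sup>*\<^sup>* u w" using that(1,3,4) unfolding connected_in_def by blast
    then show ?thesis using that(2) by (rule rtranclp_adj_restrict_to_mono[rotated])
  qed
  have "?R u x \<and> ?R x u" if "u \<in> V1 \<union> V2" for u
    using that lift[OF assms(1)] lift[OF assms(2)] assms(3,4) by blast
  then have "?R u w" if "u \<in> V1 \<union> V2" "w \<in> V1 \<union> V2" for u w
    using that by (meson rtranclp_trans)
  moreover have "V1 \<union> V2 \<subseteq> verts G" "E1 \<union> E2 \<subseteq> edges G" "\<forall>e\<in>E1 \<union> E2. ends G e \<subseteq> V1 \<union> V2"
    using assms(1,2) unfolding connected_in_def by blast+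
  ultimately show ?thesis unfolding connected_in_def by blast
qed

lemma connected_in_subset_adj_closed:
  assumes "connected_in G V E" "adj_closed G X" "v \<in> V" "v \<in> X"
  shows "V \<subseteq> X"
proof
  fix w assume "w \<in> V"
  with assms(1,3) have "(adj G)\<^sup>*\<^sup>* v w" by (rule connected_in_rtranclp)
  then show "w \<in> X"
  proof (induction rule: rtranclp_induct)
    case (step y z)
    then show ?case using assms(2) unfolding adj_closed_def by blast
  qed (rule assms(4))
qed

lemma connected_in_component:
  assumes "graph G" "x \<in> verts G"
  defines "C \<equiv> {y. (adj G)\<^sup>*\<^sup>* x y}"
  shows "connected_in G C {e\<in>edges G. ends G e \<subseteq> C}"
proof -
  let ?R = "(adj (restrict_to G C {e\<in>edges G. ends G e \<subseteq> C}))\<^sup>*\<^sup>*"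
  have from_x: "?R x y" if "(adj G)\<^sup>*\<^sup>* x y" for y
    using that
  proof (induction rule: rtranclp_induct)
    case (step y z)
    then obtain e where "e \<in> edges G" "ends G e = {y, z}" by (auto simp: adj_def)
    moreover have "y \<in> C" "z \<in> C" using step unfolding C_def by auto
    ultimately have "adj (restrict_to G C {e\<in>edges G. ends G e \<subseteq> C}) y z"
      by (auto simp: adj_restrict_to)
    then show ?case using step.IH by (rule rtranclp.rtrancl_into_rtrancl[rotated])
  qed simp
  have "?R u w" if "u \<in> C" "w \<in> C" for u w
    using rtranclp_trans[OF rtranclp_adj_sym[OF from_x] from_x] that unfolding C_def by blast
  moreover have "C \<subseteq> verts G" using rtranclp_adj_verts[OF assms(1,2)] unfolding C_def by blast
  ultimately show ?thesis unfolding connected_in_def by auto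
qed

lemma connected_induced_insert:
  assumes "connected_graph (induced H S)" "c \<in> S" "adj H c d"
  shows "connected_graph (induced H (insert d S))"
proof -
  let ?R = "(adj (induced H (insert d S)))\<^sup>*\<^sup>*"
  have "adj (induced H S) u w \<Longrightarrow> adj (induced H (insert d S)) u w" for u w
    unfolding adj_def induced_def by auto
  moreover have "(adj (induced H S))\<^sup>*\<^sup>* u w" if "u \<in> S" "w \<in> S" for u w
    using assms(1) that unfolding connected_graph_def by (simp add: induced_def)
  ultimately have old: "?R u w" if "u \<in> S" "w \<in> S" for u w
    using that by (blast intro: rtranclp_adj_mono)
  have "adj (induced H (insert d S)) c d" using assms(2,3) unfolding adj_def induced_def by auto
  then have "?R c d" "?R d c" by (auto intro: rtranclp_adj_sym)
  then have "?R u c \<and> ?R c u" if "u \<in> insert d S" for u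
    using that old assms(2) by auto
  then have "?R u w" if "u \<in> insert d S" "w \<in> insert d S" for u w
    using that by (meson rtranclp_trans)
  then show ?thesis unfolding connected_graph_def by (simp add: induced_def)
qed

lemma sd_le_connected_in: "graph G \<Longrightarrow> connected_in G V E \<Longrightarrow> A \<subseteq> V \<Longrightarrow> sd G l A \<le> ereal (sum l E)"
  unfolding sd_def by (rule Inf_lower) (force simp: glength_def dest: connected_in_subgraph)

lemma sd_greatest:
  assumes "\<And>V E. connected_in G V E \<Longrightarrow> A \<subseteq> V \<Longrightarrow> x \<le> ereal (sum l E)"
  shows "x \<le> sd G l A"
  unfolding sd_def glength_def by (rule Inf_greatest) (auto intro: assms connected_in_of_subgraph)

lemma sd_attained:
  assumes "graph G" "sd G l A \<noteq> \<infinity>"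
  obtains V E where "connected_in G V E" "A \<subseteq> V" "sd G l A = ereal (sum l E)"
proof -
  let ?M = "{ereal (glength l S) |S. subgraph S G \<and> connected_graph S \<and> A \<subseteq> verts S}"
  have "?M \<subseteq> (\<lambda>E. ereal (sum l E)) ` Pow (edges G)"
    by (auto simp: glength_def subgraph_def)
  then have "finite ?M" using assms(1) finite_surj[of "Pow (edges G)"] by (auto simp: graph_def)
  moreover have "?M \<noteq> {}" using assms(2) unfolding sd_def by (metis Inf_empty top_ereal_def)
  ultimately have "Inf ?M \<in> ?M" using Min_Inf Min_in by fastforce
  then obtain S where "sd G l A = ereal (glength l S)" "subgraph S G" "connected_graph S" "A \<subseteq> verts S"
    unfolding sd_def by blast
  then show ?thesis using that connected_in_of_subgraph unfolding glength_def by blast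
qed

lemma sd_nonneg: "\<forall>e\<in>edges G. 0 \<le> l e \<Longrightarrow> 0 \<le> sd G l A"
  by (rule sd_greatest) (auto simp: connected_in_def intro!: sum_nonneg)

lemma sd_empty: "graph G \<Longrightarrow> \<forall>e\<in>edges G. 0 \<le> l e \<Longrightarrow> sd G l {} = 0"
  using sd_le_connected_in[OF _ connected_in_empty] sd_nonneg by (metis antisym empty_subsetI sum.empty zero_ereal_def)

lemma sd_supergraph_le: "graph G2 \<Longrightarrow> subgraph G G2 \<Longrightarrow> sd G2 l A \<le> sd G l A"
  by (rule sd_greatest) (auto intro: sd_le_connected_in connected_in_supergraph)

lemma sd_empty_le:
  assumes "graph G" "length_function G' l"
  shows "sd G l {} \<le> sd G' l {}"
proof -
  have "sd G l {} \<le> 0" using sd_le_connected_in[OF assms(1) connected_in_empty, of "{}" l] by (simp add: zero_ereal_def)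
  also have "0 \<le> sd G' l {}"
    using assms(2) unfolding length_function_def by (intro sd_nonneg) (simp add: less_imp_le)
  finally show ?thesis .
qed

lemma fully_geodesicI:
  assumes "graph G'" "subgraph G G'" "\<And>A. A \<subseteq> verts G \<Longrightarrow> sd G l A \<le> sd G' l A"
  shows "fully_geodesic G' l G"
  unfolding fully_geodesic_def k_geodesic_def
  using assms sd_supergraph_le[OF assms(1,2)] by (blast intro: antisym)

section \<open>Gluing connected pieces\<close>

lemma sum_Un_le:
  fixes l :: "'a \<Rightarrow> 'b::ordered_comm_monoid_add"
  assumes "finite A" "finite B" "\<forall>x\<in>A \<inter> B. 0 \<le> l x"
  shows "sum l (A \<union> B) \<le> sum l A + sum l B"
proof -
  have "0 \<le> sum l (A \<inter> B)" using assms(3) by (intro sum_nonneg) auto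
  then have "sum l (A \<union> B) \<le> sum l (A \<union> B) + sum l (A \<inter> B)"
    by (rule add_increasing2) simp
  then show ?thesis by (simp add: sum.union_inter[OF assms(1,2)])
qed

lemma sum_UN_le:
  fixes l :: "'a \<Rightarrow> 'b::ordered_comm_monoid_add"
  assumes "finite I" "\<forall>i\<in>I. finite (F i)" "\<forall>x\<in>(\<Union>i\<in>I. F i). 0 \<le> l x"
  shows "sum l (\<Union>i\<in>I. F i) \<le> (\<Sum>i\<in>I. sum l (F i))"
  using assms
proof (induction I rule: finite_induct)
  case (insert i I)
  then have "sum l (F i \<union> (\<Union>i\<in>I. F i)) \<le> sum l (F i) + sum l (\<Union>i\<in>I. F i)"
    by (intro sum_Un_le) auto
  also have "\<dots> \<le> sum l (F i) + (\<Sum>i\<in>I. sum l (F i))"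
    using insert by (intro add_left_mono) auto
  finally show ?case using insert by simp
qed simp

lemma connected_in_UN_sets:
  assumes "\<forall>i\<in>I. connected_in K (Vs i) (Es i)"
  shows "(\<Union>i\<in>I. Vs i) \<subseteq> verts K" and "(\<Union>i\<in>I. Es i) \<subseteq> edges K"
    and "\<forall>e\<in>(\<Union>i\<in>I. Es i). ends K e \<subseteq> (\<Union>i\<in>I. Vs i)"
  using assms unfolding connected_in_def by blast+

lemma connected_in_glue_sets:
  assumes "\<forall>x\<in>V. connected_in K2 (RV x) (RE x)" "\<forall>g\<in>E. connected_in K2 (QV g) (QE g)"
  defines "UV \<equiv> (\<Union>x\<in>V. RV x) \<union> (\<Union>g\<in>E. QV g)" and "UE \<equiv> (\<Union>x\<in>V. RE x) \<union> (\<Union>g\<in>E. QE g)"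
  shows "UV \<subseteq> verts K2 \<and> UE \<subseteq> edges K2 \<and> (\<forall>e\<in>UE. ends K2 e \<subseteq> UV)"
proof (intro conjI)
  note R = connected_in_UN_sets[OF assms(1)] and Q = connected_in_UN_sets[OF assms(2)]
  show "UV \<subseteq> verts K2" "UE \<subseteq> edges K2" using R(1,2) Q(1,2) unfolding UV_def UE_def by simp_all
  show "\<forall>e\<in>UE. ends K2 e \<subseteq> UV"
  proof
    fix e assume "e \<in> UE"
    then consider "e \<in> (\<Union>x\<in>V. RE x)" | "e \<in> (\<Union>g\<in>E. QE g)" unfolding UE_def by blast
    then show "ends K2 e \<subseteq> UV"
    proof cases
      case 1 then show ?thesis using bspec[OF R(3) 1] unfolding UV_def by blast
    next
      case 2 then show ?thesis using bspec[OF Q(3) 2] unfolding UV_def by blast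
    qed
  qed
qed

lemma connected_in_glue:
  fixes K :: "('a, 'b) mgraph" and K2 :: "('v, 'e) mgraph"
  assumes "graph K" "connected_in K V E"
    and R: "\<forall>x\<in>V. connected_in K2 (RV x) (RE x) \<and> p x \<in> RV x"
    and Q: "\<forall>g\<in>E. connected_in K2 (QV g) (QE g) \<and> p ` ends K g \<subseteq> QV g"
  shows "connected_in K2 ((\<Union>x\<in>V. RV x) \<union> (\<Union>g\<in>E. QV g)) ((\<Union>x\<in>V. RE x) \<union> (\<Union>g\<in>E. QE g))"
proof -
  define UV where "UV = (\<Union>x\<in>V. RV x) \<union> (\<Union>g\<in>E. QV g)"
  define UE where "UE = (\<Union>x\<in>V. RE x) \<union> (\<Union>g\<in>E. QE g)"
  let ?R = "(adj (restrict_to K2 UV UE))\<^sup>*\<^sup>*"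
  have piece: "?R u w" if "connected_in K2 V' E'" "E' \<subseteq> UE" "u \<in> V'" "w \<in> V'" for V' E' u w
    using that rtranclp_adj_restrict_to_mono[of E' UE K2 V' u w UV] unfolding connected_in_def by blast
  have along: "?R (p x) (p y)" if "(adj (restrict_to K V E))\<^sup>*\<^sup>* x y" for x y
    using that
  proof (induction rule: rtranclp_induct)
    case (step y z)
    then obtain g where "g \<in> E" "ends K g = {y, z}" by (auto simp: adj_restrict_to)
    moreover have "QE g \<subseteq> UE" unfolding UE_def using \<open>g \<in> E\<close> by blast
    ultimately have "?R (p y) (p z)" using Q piece[of "QV g" "QE g"] by auto
    then show ?case using step.IH by (rule rtranclp_trans[rotated])
  qed simp
  have reach: "\<exists>x\<in>V. ?R (p x) z" if "z \<in> UV" for z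
  proof -
    from that consider x where "x \<in> V" "z \<in> RV x" | g where "g \<in> E" "z \<in> QV g"
      unfolding UV_def by blast
    then show ?thesis
    proof cases
      case 1
      then show ?thesis using R piece[of "RV x" "RE x"] unfolding UE_def by blast
    next
      case 2
      then have "g \<in> edges K" "ends K g \<subseteq> V" using assms(2) unfolding connected_in_def by auto
      then obtain x where "x \<in> ends K g" "x \<in> V" using ends_eq_doubleton[OF assms(1)] by blast
      then show ?thesis using 2 Q piece[of "QV g" "QE g"] unfolding UE_def by blast
    qed
  qed
  have "?R u w" if u: "u \<in> UV" and w: "w \<in> UV" for u w
  proof -
    obtain x where x: "x \<in> V" "?R (p x) u" using reach[OF u] by blast
    obtain y where y: "y \<in> V" "?R (p y) w" using reach[OF w] by blast
    have "(adj (restrict_to K V E))\<^sup>*\<^sup>* x y"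
      using assms(2) x(1) y(1) unfolding connected_in_def by blast
    then have "?R (p x) (p y)" by (rule along)
    then show ?thesis using rtranclp_adj_sym[OF x(2)] y(2) by (meson rtranclp_trans)
  qed
  moreover have "UV \<subseteq> verts K2 \<and> UE \<subseteq> edges K2 \<and> (\<forall>e\<in>UE. ends K2 e \<subseteq> UV)"
    unfolding UV_def UE_def using R Q by (intro connected_in_glue_sets) blast+
  ultimately have "connected_in K2 UV UE" unfolding connected_in_def by blast
  then show ?thesis unfolding UV_def UE_def .
qed

lemma sum_glue_le:
  fixes l :: "'e \<Rightarrow> real"
  assumes "graph K2" "finite V" "finite E" "\<forall>e\<in>edges K2. 0 \<le> l e"
    and "\<forall>x\<in>V. connected_in K2 (RV x) (RE x)" "\<forall>g\<in>E. connected_in K2 (QV g) (QE g)"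
  shows "sum l ((\<Union>x\<in>V. RE x) \<union> (\<Union>g\<in>E. QE g)) \<le> (\<Sum>x\<in>V. sum l (RE x)) + (\<Sum>g\<in>E. sum l (QE g))"
proof -
  have fin: "\<forall>x\<in>V. finite (RE x)" "\<forall>g\<in>E. finite (QE g)"
    using assms(1,5,6) connected_in_finite by blast+
  have nn: "\<forall>e\<in>(\<Union>x\<in>V. RE x) \<union> (\<Union>g\<in>E. QE g). 0 \<le> l e"
    using assms(4-6) unfolding connected_in_def by blast
  have "sum l ((\<Union>x\<in>V. RE x) \<union> (\<Union>g\<in>E. QE g)) \<le> sum l (\<Union>x\<in>V. RE x) + sum l (\<Union>g\<in>E. QE g)"
    using fin nn assms(2,3) by (intro sum_Un_le) auto
  also have "\<dots> \<le> (\<Sum>x\<in>V. sum l (RE x)) + (\<Sum>g\<in>E. sum l (QE g))"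
    using fin nn assms(2,3) by (intro add_mono sum_UN_le) auto
  finally show ?thesis .
qed

lemma sum_pieces_le:
  fixes c :: "'a \<Rightarrow> real" and d l :: "'b \<Rightarrow> real"
  assumes "finite V" "card V \<le> n" "\<forall>x\<in>V. c x \<le> a" "0 \<le> a"
    and "finite E" "card E \<le> m" "\<forall>e\<in>E. d e \<le> l e + b" "0 \<le> b"
  shows "(\<Sum>x\<in>V. c x) + (\<Sum>e\<in>E. d e) \<le> sum l E + (n * a + m * b)"
proof -
  have "(\<Sum>x\<in>V. c x) \<le> card V * a" using assms(3) by (simp add: sum_bounded_above)
  also have "\<dots> \<le> n * a" using assms(2,4) by (simp add: mult_right_mono)
  finally have V: "(\<Sum>x\<in>V. c x) \<le> n * a" .
  have "(\<Sum>e\<in>E. d e) \<le> (\<Sum>e\<in>E. l e + b)" using assms(7) by (simp add: sum_mono)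
  also have "\<dots> = sum l E + card E * b" by (simp add: sum.distrib)
  also have "\<dots> \<le> sum l E + m * b" using assms(6,8) by (simp add: mult_right_mono)
  finally show ?thesis using V by simp
qed

section \<open>Extending the branch sets of a minor model\<close>

locale minor_model =
  fixes H :: "('w, 'f) mgraph" and G :: "('v, 'e) mgraph"
    and B :: "'v \<Rightarrow> 'w set" and f :: "'e \<Rightarrow> 'f" and a0 :: 'v
  assumes graph_H: "graph H" and graph_G: "graph G"
    and branch_sets: "\<forall>v\<in>verts G. B v \<noteq> {} \<and> B v \<subseteq> verts H \<and> connected_graph (induced H (B v))"
    and branch_sets_disjoint: "\<forall>u\<in>verts G. \<forall>v\<in>verts G. u \<noteq> v \<longrightarrow> B u \<inter> B v = {}"
    and branch_edges: "\<forall>e\<in>edges G. f e \<in> edges H \<and>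
      (\<exists>u v a b. ends G e = {u, v} \<and> ends H (f e) = {a, b} \<and> a \<in> B u \<and> b \<in> B v)"
    and root: "a0 \<in> verts G"
begin

definition "compG = {v. (adj G)\<^sup>*\<^sup>* a0 v}"
definition "rep v = (SOME x. x \<in> B v)"
definition "compH = {y. (adj H)\<^sup>*\<^sup>* (rep a0) y}"

lemma compG_subset: "compG \<subseteq> verts G"
  unfolding compG_def using rtranclp_adj_verts[OF graph_G root] by blast

lemma root_in_compG: "a0 \<in> compG"
  unfolding compG_def by simp

lemma adj_closed_compG: "adj_closed G compG"
  unfolding compG_def by (rule adj_closed_component)

lemma adj_closed_compH: "adj_closed H compH"
  unfolding compH_def by (rule adj_closed_component)

lemma rep_in_branch: "v \<in> verts G \<Longrightarrow> rep v \<in> B v"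
  unfolding rep_def using branch_sets by (simp add: some_in_eq)

lemma branch_edge:
  assumes "e \<in> edges G"
  obtains u v a b where "f e \<in> edges H" "ends G e = {u, v}" "ends H (f e) = {a, b}" "a \<in> B u" "b \<in> B v"
  using bspec[OF branch_edges assms] by blast

lemma branch_rtranclp: "v \<in> verts G \<Longrightarrow> x \<in> B v \<Longrightarrow> y \<in> B v \<Longrightarrow> (adj H)\<^sup>*\<^sup>* x y"
  using branch_sets by (metis rtranclp_of_connected_induced)

lemma rtranclp_rep_of_adj:
  assumes "adj G v w"
  shows "(adj H)\<^sup>*\<^sup>* (rep v) (rep w)"
proof -
  obtain e where e: "e \<in> edges G" "ends G e = {v, w}" using assms unfolding adj_def by blast
  have vw: "v \<in> verts G" "w \<in> verts G" using adj_verts[OF graph_G assms] by auto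
  obtain u' v' a b where "f e \<in> edges H"
    and uv: "ends G e = {u', v'}" "ends H (f e) = {a, b}" "a \<in> B u'" "b \<in> B v'"
    by (rule branch_edge[OF e(1)])
  then have ab: "adj H a b" "adj H b a" using uv(2) unfolding adj_def by (auto simp: insert_commute)
  have path: "(adj H)\<^sup>*\<^sup>* (rep x) (rep y)" if "x \<in> verts G" "y \<in> verts G" "c \<in> B x" "d \<in> B y" "adj H c d"
    for x y c d
  proof -
    have "(adj H)\<^sup>*\<^sup>* (rep x) c" using branch_rtranclp[OF that(1) rep_in_branch[OF that(1)] that(3)] .
    moreover have "(adj H)\<^sup>*\<^sup>* d (rep y)" using branch_rtranclp[OF that(2) that(4) rep_in_branch[OF that(2)]] .
    ultimately show ?thesis using that(5) by (meson converse_rtranclp_into_rtranclp rtranclp_trans)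
  qed
  from uv(1) e(2) consider "u' = v" "v' = w" | "u' = w" "v' = v" by (auto simp: doubleton_eq_iff)
  then show ?thesis
  proof cases
    case 1 then show ?thesis using path[OF vw, of a b] uv(3,4) ab(1) by simp
  next
    case 2 then show ?thesis using path[OF vw, of b a] uv(3,4) ab(2) by simp
  qed
qed

lemma branch_subset_compH: "v \<in> compG \<Longrightarrow> B v \<subseteq> compH"
proof
  fix x assume v: "v \<in> compG" and x: "x \<in> B v"
  have "(adj G)\<^sup>*\<^sup>* a0 v" using v unfolding compG_def by simp
  then have "(adj H)\<^sup>*\<^sup>* (rep a0) (rep v)"
    by (induction rule: rtranclp_induct) (auto intro: rtranclp_trans rtranclp_rep_of_adj)
  moreover have "(adj H)\<^sup>*\<^sup>* (rep v) x" using branch_rtranclp rep_in_branch x v compG_subset by blast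
  ultimately show "x \<in> compH" unfolding compH_def by (simp add: rtranclp_trans)
qed

lemma rep_in_compH: "v \<in> compG \<Longrightarrow> rep v \<in> compH"
  using branch_subset_compH rep_in_branch compG_subset by blast

lemma compH_subset: "compH \<subseteq> verts H"
proof -
  have "rep a0 \<in> verts H" using rep_in_branch[OF root] branch_sets root by blast
  then show ?thesis unfolding compH_def using rtranclp_adj_verts[OF graph_H] by blast
qed

definition extends_branches :: "('v \<Rightarrow> 'w set) \<Rightarrow> bool" where
  "extends_branches B2 \<longleftrightarrow>
     (\<forall>v\<in>compG. B v \<subseteq> B2 v \<and> B2 v \<subseteq> verts H \<and> connected_graph (induced H (B2 v))) \<and>
     (\<forall>u\<in>compG. \<forall>v\<in>compG. u \<noteq> v \<longrightarrow> B2 u \<inter> B2 v = {})"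

lemma extends_branches_refl: "extends_branches B"
  unfolding extends_branches_def using branch_sets branch_sets_disjoint compG_subset by blast

lemma extends_branches_subset_compH: "extends_branches B2 \<Longrightarrow> v \<in> compG \<Longrightarrow> B2 v \<subseteq> compH"
proof
  fix x assume B2: "extends_branches B2" and v: "v \<in> compG" and x: "x \<in> B2 v"
  have "rep v \<in> B2 v" "connected_graph (induced H (B2 v))"
    using B2 v rep_in_branch compG_subset unfolding extends_branches_def by blast+
  then have "(adj H)\<^sup>*\<^sup>* (rep v) x" using x by (metis rtranclp_of_connected_induced)
  moreover have "(adj H)\<^sup>*\<^sup>* (rep a0) (rep v)" using rep_in_compH[OF v] unfolding compH_def by simp
  ultimately show "x \<in> compH" unfolding compH_def by (simp add: rtranclp_trans)
qed

lemma extends_branches_insert: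
  assumes B2: "extends_branches B2" and v: "v \<in> compG" "c \<in> B2 v"
    and cd: "adj H c d" "d \<notin> (\<Union>u\<in>compG. B2 u)"
  shows "extends_branches (B2(v := insert d (B2 v)))"
  unfolding extends_branches_def
proof (intro conjI ballI impI)
  fix w assume w: "w \<in> compG"
  have "d \<in> verts H" using adj_verts[OF graph_H cd(1)] by simp
  then show "B w \<subseteq> (B2(v := insert d (B2 v))) w" "(B2(v := insert d (B2 v))) w \<subseteq> verts H"
    using B2 w unfolding extends_branches_def by auto
  show "connected_graph (induced H ((B2(v := insert d (B2 v))) w))"
    using B2 w v connected_induced_insert[OF _ v(2) cd(1)] unfolding extends_branches_def by auto
next
  fix u w assume uw: "u \<in> compG" "w \<in> compG" "u \<noteq> w"
  then have "B2 u \<inter> B2 w = {}" using B2 unfolding extends_branches_def by blast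
  moreover have "d \<notin> B2 u" "d \<notin> B2 w" using cd(2) uw by blast+
  ultimately show "(B2(v := insert d (B2 v))) u \<inter> (B2(v := insert d (B2 v))) w = {}" using uw(3) by auto
qed

text \<open>An extension covering the most vertices covers all of compH: otherwise an edge of H
  leaves the covered set, and its outer end can be added to a branch set.\<close>
lemma ex_extends_branches_covering:
  "\<exists>B2. extends_branches B2 \<and> (\<Union>v\<in>compG. B2 v) = compH"
proof -
  have "\<forall>B2. extends_branches B2 \<longrightarrow> card (\<Union>v\<in>compG. B2 v) < Suc (card (verts H))"
  proof (intro allI impI)
    fix B2 assume "extends_branches B2"
    then have "(\<Union>v\<in>compG. B2 v) \<subseteq> verts H" unfolding extends_branches_def by blast
    then have "card (\<Union>v\<in>compG. B2 v) \<le> card (verts H)"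
      using graph_H unfolding graph_def by (simp add: card_mono)
    then show "card (\<Union>v\<in>compG. B2 v) < Suc (card (verts H))" by simp
  qed
  then obtain Bm where Bm: "extends_branches Bm"
    and max: "\<forall>B3. extends_branches B3 \<longrightarrow> card (\<Union>v\<in>compG. B3 v) \<le> card (\<Union>v\<in>compG. Bm v)"
    using Lattices_Big.ex_has_greatest_nat[where P = extends_branches and f = "\<lambda>B2. card (\<Union>v\<in>compG. B2 v)",
      OF extends_branches_refl] by blast
  define U where "U = (\<Union>v\<in>compG. Bm v)"
  have "U \<subseteq> verts H" using Bm unfolding U_def extends_branches_def by blast
  then have "finite U" using graph_H finite_subset unfolding graph_def by blast
  have "U \<subseteq> compH" unfolding U_def using extends_branches_subset_compH[OF Bm] by blast
  moreover have "compH \<subseteq> U"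
  proof (rule ccontr)
    assume "\<not> compH \<subseteq> U"
    then obtain y where y: "(adj H)\<^sup>*\<^sup>* (rep a0) y" "y \<notin> U" unfolding compH_def by blast
    have "B a0 \<subseteq> Bm a0" using Bm root_in_compG unfolding extends_branches_def by blast
    then have "rep a0 \<in> U" using rep_in_branch[OF root] root_in_compG unfolding U_def by blast
    with y obtain c d where cd: "c \<in> U" "d \<notin> U" "adj H c d"
      by (blast elim: rtranclp_exits)
    then obtain v where v: "v \<in> compG" "c \<in> Bm v" unfolding U_def by blast
    have "extends_branches (Bm(v := insert d (Bm v)))"
      using extends_branches_insert[OF Bm v cd(3)] cd(2) unfolding U_def .
    moreover have "(\<Union>u\<in>compG. (Bm(v := insert d (Bm v))) u) = insert d U"
      unfolding U_def using v(1) by auto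
    ultimately have "card (insert d U) \<le> card U" using max unfolding U_def by metis
    then show False using \<open>finite U\<close> cd(2) by simp
  qed
  ultimately show ?thesis using Bm unfolding U_def by blast
qed

definition "cell = (SOME B2. extends_branches B2 \<and> (\<Union>v\<in>compG. B2 v) = compH)"

lemma extends_branches_cell: "extends_branches cell" and Union_cell: "(\<Union>v\<in>compG. cell v) = compH"
  using someI_ex[OF ex_extends_branches_covering] unfolding cell_def by auto

lemma branch_subset_cell: "v \<in> compG \<Longrightarrow> B v \<subseteq> cell v"
  using extends_branches_cell unfolding extends_branches_def by blast

lemma rep_in_cell: "v \<in> compG \<Longrightarrow> rep v \<in> cell v"
  using branch_subset_cell rep_in_branch compG_subset by blast

lemma cell_subset_compH: "v \<in> compG \<Longrightarrow> cell v \<subseteq> compH"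
  using Union_cell by blast

lemma cells_disjoint: "u \<in> compG \<Longrightarrow> v \<in> compG \<Longrightarrow> y \<in> cell u \<Longrightarrow> y \<in> cell v \<Longrightarrow> u = v"
  using extends_branches_cell unfolding extends_branches_def by blast

definition "owner y = (THE v. v \<in> compG \<and> y \<in> cell v)"

lemma owner_eq: "v \<in> compG \<Longrightarrow> y \<in> cell v \<Longrightarrow> owner y = v"
  unfolding owner_def using cells_disjoint by blast

lemma owner_in_compG: "y \<in> compH \<Longrightarrow> owner y \<in> compG"
  and in_cell_owner: "y \<in> compH \<Longrightarrow> y \<in> cell (owner y)"
  using Union_cell owner_eq by blast+

lemma owner_rep: "v \<in> compG \<Longrightarrow> owner (rep v) = v"
  using owner_eq rep_in_cell by blast

definition "cell_edges v = {g\<in>edges H. ends H g \<subseteq> cell v}"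

lemma finite_cell_edges: "finite (cell_edges v)"
  using graph_H unfolding cell_edges_def graph_def by simp

lemma connected_in_cell: "v \<in> compG \<Longrightarrow> connected_in H (cell v) (cell_edges v)"
proof -
  assume v: "v \<in> compG"
  have eq: "restrict_to H (cell v) (cell_edges v) = induced H (cell v)"
    unfolding restrict_to_def induced_def cell_edges_def by simp
  have "connected_graph (induced H (cell v))" "cell v \<subseteq> verts H"
    using extends_branches_cell v unfolding extends_branches_def by auto
  then show ?thesis unfolding connected_in_def eq unfolding connected_graph_def cell_edges_def
    by (auto simp: induced_def)
qed

definition "edge_piece_verts e = (\<Union>v\<in>ends G e. cell v) \<union> ends H (f e)"
definition "edge_piece_edges e = insert (f e) (\<Union>v\<in>ends G e. cell_edges v)"

lemma edge_piece:
  assumes e: "e \<in> edges G" "ends G e \<subseteq> compG"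
  shows "connected_in H (edge_piece_verts e) (edge_piece_edges e)"
    and "rep ` ends G e \<subseteq> edge_piece_verts e"
    and "ends H (f e) \<subseteq> compH"
    and "owner ` ends H (f e) = ends G e"
proof -
  obtain u v a b where fe: "f e \<in> edges H"
    and uv: "ends G e = {u, v}" "ends H (f e) = {a, b}" "a \<in> B u" "b \<in> B v"
    by (rule branch_edge[OF e(1)])
  have u: "u \<in> compG" and v: "v \<in> compG" using e(2) uv(1) by auto
  have a: "a \<in> cell u" and b: "b \<in> cell v" using branch_subset_cell u v uv(3,4) by blast+
  have "connected_in H (cell u \<union> ends H (f e)) (cell_edges u \<union> {f e})"
    by (rule connected_in_Un[OF connected_in_cell[OF u] connected_in_edge[OF graph_H fe] a])
      (simp add: uv(2))
  then have "connected_in H ((cell u \<union> ends H (f e)) \<union> cell v) ((cell_edges u \<union> {f e}) \<union> cell_edges v)"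
    by (rule connected_in_Un[OF _ connected_in_cell[OF v], where x = b]) (auto simp: uv(2) b)
  moreover have "edge_piece_verts e = (cell u \<union> ends H (f e)) \<union> cell v"
    "edge_piece_edges e = (cell_edges u \<union> {f e}) \<union> cell_edges v"
    unfolding edge_piece_verts_def edge_piece_edges_def uv(1) by auto
  ultimately show "connected_in H (edge_piece_verts e) (edge_piece_edges e)" by simp
  show "rep ` ends G e \<subseteq> edge_piece_verts e"
    using rep_in_cell[OF u] rep_in_cell[OF v] uv(1) unfolding edge_piece_verts_def by auto
  show "ends H (f e) \<subseteq> compH" using cell_subset_compH[OF u] cell_subset_compH[OF v] a b uv(2) by auto
  show "owner ` ends H (f e) = ends G e" using owner_eq[OF u a] owner_eq[OF v b] uv by auto
qed

end

section \<open>A geodesic supergraph of the minor\<close>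

locale geodesic_extension = minor_model H G B f a0
  for H :: "('w, 'f) mgraph" and G :: "('v, 'e) mgraph" and B f a0 +
  fixes k :: nat and G' :: "('v, 'e) mgraph" and l :: "'e \<Rightarrow> real"
  assumes two_le_k: "2 \<le> k" and graph_G': "graph G'" and subgraph_G: "subgraph G G'"
    and length_l: "length_function G' l" and geodesic: "k_geodesic k G' l G"
begin

definition "compG' = {x. (adj G')\<^sup>*\<^sup>* a0 x}"

lemma nonneg_l: "\<forall>e\<in>edges G'. 0 \<le> l e"
  using length_l unfolding length_function_def by (simp add: less_imp_le)

lemma nonneg_l_G: "\<forall>e\<in>edges G. 0 \<le> l e"
  using nonneg_l subgraph_G unfolding subgraph_def by blast

lemma root_in_G': "a0 \<in> verts G'"
  using root subgraph_G unfolding subgraph_def by blast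

lemma adj_closed_compG': "adj_closed G' compG'"
  unfolding compG'_def by (rule adj_closed_component)

lemma compG'_subset: "compG' \<subseteq> verts G'"
  unfolding compG'_def using rtranclp_adj_verts[OF graph_G' root_in_G'] by blast

lemma compG_subset_compG': "compG \<subseteq> compG'"
proof
  fix x assume "x \<in> compG"
  then have "(adj G)\<^sup>*\<^sup>* a0 x" unfolding compG_def by simp
  moreover have "adj G u w \<Longrightarrow> adj G' u w" for u w
    using subgraph_G unfolding subgraph_def adj_def by (metis subsetD)
  ultimately have "(adj G')\<^sup>*\<^sup>* a0 x" by (rule rtranclp_adj_mono[rotated])
  then show "x \<in> compG'" unfolding compG'_def by simp
qed

text \<open>The only use of 2-geodesicity: a vertex of G joined to a0 in G' is joined to a0 in G.\<close>
lemma compG'_verts_G: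
  assumes "x \<in> compG'" "x \<in> verts G"
  shows "x \<in> compG"
proof -
  have "connected_in G' compG' {e\<in>edges G'. ends G' e \<subseteq> compG'}"
    unfolding compG'_def using connected_in_component[OF graph_G' root_in_G'] .
  moreover have "{a0, x} \<subseteq> compG'" using assms(1) root_in_compG compG_subset_compG' by auto
  ultimately have "sd G' l {a0, x} \<le> ereal (sum l {e\<in>edges G'. ends G' e \<subseteq> compG'})"
    by (rule sd_le_connected_in[OF graph_G'])
  moreover have "sd G l {a0, x} = sd G' l {a0, x}"
    using geodesic root assms(2) two_le_k unfolding k_geodesic_def by (simp add: card_insert_if)
  ultimately have "sd G l {a0, x} \<noteq> \<infinity>" by (metis ereal_infty_less_eq(1) ereal_less_eq(3) PInfty_neq_ereal(1))
  then obtain V E where VE: "connected_in G V E" "{a0, x} \<subseteq> V"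
    by (rule sd_attained[OF graph_G])
  then have "(adj G)\<^sup>*\<^sup>* a0 x" using connected_in_rtranclp[OF VE(1)] by simp
  then show ?thesis unfolding compG_def by simp
qed

definition "sdG X = real_of_ereal (sd G l X)"

lemma sdG_nonneg: "0 \<le> sdG X"
  unfolding sdG_def using sd_nonneg[OF nonneg_l_G] by (simp add: real_of_ereal_pos)

lemma sd_G_eq_sdG: "X \<subseteq> compG \<Longrightarrow> sd G l X = ereal (sdG X)"
proof -
  assume X: "X \<subseteq> compG"
  have "connected_in G compG {e\<in>edges G. ends G e \<subseteq> compG}"
    unfolding compG_def using connected_in_component[OF graph_G root] .
  then have "sd G l X \<le> ereal (sum l {e\<in>edges G. ends G e \<subseteq> compG})"
    using sd_le_connected_in[OF graph_G _ X] by blast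
  then have "sd G l X \<noteq> \<infinity>" by auto
  moreover have "sd G l X \<noteq> -\<infinity>" using sd_nonneg[OF nonneg_l_G, of X] by auto
  ultimately show ?thesis unfolding sdG_def by (cases "sd G l X") auto
qed

definition "steiner_piece X = (SOME p. connected_in G (fst p) (snd p) \<and> X \<subseteq> fst p \<and> sum l (snd p) = sdG X)"

lemma steiner_piece:
  assumes "X \<subseteq> compG"
  shows "connected_in G (fst (steiner_piece X)) (snd (steiner_piece X))"
    and "X \<subseteq> fst (steiner_piece X)" and "sum l (snd (steiner_piece X)) = sdG X"
proof -
  have "sd G l X \<noteq> \<infinity>" using sd_G_eq_sdG[OF assms] by simp
  then obtain V E where "connected_in G V E" "X \<subseteq> V" "sd G l X = ereal (sum l E)"
    using sd_attained[OF graph_G] by metis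
  then have "\<exists>p. connected_in G (fst p) (snd p) \<and> X \<subseteq> fst p \<and> sum l (snd p) = sdG X"
    using sd_G_eq_sdG[OF assms] by (intro exI[of _ "(V, E)"]) simp
  then have "connected_in G (fst (steiner_piece X)) (snd (steiner_piece X)) \<and>
      X \<subseteq> fst (steiner_piece X) \<and> sum l (snd (steiner_piece X)) = sdG X"
    unfolding steiner_piece_def by (rule someI_ex)
  then show "connected_in G (fst (steiner_piece X)) (snd (steiner_piece X))"
    and "X \<subseteq> fst (steiner_piece X)" and "sum l (snd (steiner_piece X)) = sdG X" by blast+
qed

lemma sdG_singleton: "v \<in> compG \<Longrightarrow> sdG {v} = 0"
proof -
  assume v: "v \<in> compG"
  have "v \<in> verts G" using v compG_subset by blast
  then have "sd G l {v} \<le> ereal (sum l {})"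
    using sd_le_connected_in[OF graph_G connected_in_singleton] by blast
  then show ?thesis using sd_G_eq_sdG[of "{v}"] sdG_nonneg[of "{v}"] v by simp
qed

lemma sdG_ends_le:
  assumes "e \<in> edges G" "ends G e \<subseteq> compG"
  shows "sdG (ends G e) \<le> l e"
proof -
  have "sd G l (ends G e) \<le> ereal (sum l {e})"
    using sd_le_connected_in[OF graph_G connected_in_edge[OF graph_G assms(1)]] by blast
  then show ?thesis using sd_G_eq_sdG[OF assms(2)] by simp
qed

definition "lift_cost =
  real (card (verts G) * card (edges H) + card (edges G) * (1 + 2 * card (edges H)))"

definition "total_cost = real (card (verts G') * card (edges H)) +
  real (card (edges G')) * (lift_cost + 1 + 2 * real (card (edges H)))"

lemma total_cost_nonneg: "0 \<le> total_cost"
  unfolding total_cost_def lift_cost_def by simp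

end

section \<open>The perturbed supergraph H' of H\<close>

locale perturbed_extension = geodesic_extension H G B f a0 k G' l
  for H G :: "(nat, nat) mgraph" and B f a0 k G' l +
  fixes \<delta> :: real
  assumes delta_pos: "0 < \<delta>"
begin

definition "vshift = Suc (Max (insert 0 (verts H)))"
definition "eshift = Suc (Max (insert 0 (edges H)))"
definition "new_verts = compG' - verts G"
definition "new_edges = {e \<in> edges G' - edges G. ends G' e \<subseteq> compG'}"
definition "emb x = (if x \<in> verts G then rep x else x + vshift)"
definition "proj y = (if y \<in> verts H then owner y else y - vshift)"

definition "H' = \<lparr>verts = verts H \<union> (\<lambda>x. x + vshift) ` new_verts,
   edges = edges H \<union> (\<lambda>e. e + eshift) ` new_edges,
   ends = (\<lambda>g. if g \<in> edges H then ends H g else emb ` ends G' (g - eshift))\<rparr>"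

definition "compH' = compH \<union> (\<lambda>x. x + vshift) ` new_verts"

definition "\<Delta> = \<delta> * lift_cost"

text \<open>Edges of H outside its component containing the branch sets never matter; they get length 1.\<close>

definition "l' g = (if g \<in> edges H then (if ends H g \<subseteq> compH then sdG (owner ` ends H g) + \<delta> else 1)
   else l (g - eshift) + \<Delta>)"

lemma Delta_nonneg: "0 \<le> \<Delta>"
  unfolding \<Delta>_def lift_cost_def using delta_pos by simp

lemma shifted_vert_notin_H: "x + vshift \<notin> verts H"
proof
  assume "x + vshift \<in> verts H"
  moreover have "finite (insert 0 (verts H))" using graph_H unfolding graph_def by simp
  ultimately have "x + vshift \<le> Max (insert 0 (verts H))" by simp
  then show False unfolding vshift_def by simp
qed

lemma shifted_edge_notin_H: "e + eshift \<notin> edges H"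
proof
  assume "e + eshift \<in> edges H"
  moreover have "finite (insert 0 (edges H))" using graph_H unfolding graph_def by simp
  ultimately have "e + eshift \<le> Max (insert 0 (edges H))" by simp
  then show False unfolding eshift_def by simp
qed

lemma compH'_subset: "compH' \<subseteq> verts H'"
  unfolding compH'_def H'_def using compH_subset by auto

lemma compH'_verts_H: "y \<in> compH' \<Longrightarrow> y \<in> verts H \<Longrightarrow> y \<in> compH"
  unfolding compH'_def using shifted_vert_notin_H by blast

lemma emb_compG':
  assumes "x \<in> compG'"
  shows "emb x \<in> compH'" and "proj (emb x) = x"
proof -
  have "emb x \<in> compH' \<and> proj (emb x) = x"
  proof (cases "x \<in> verts G")
    case True
    then have x: "x \<in> compG" using compG'_verts_G assms by blast
    then have "emb x = rep x" "rep x \<in> compH" using True rep_in_compH unfolding emb_def by auto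
    then show ?thesis using owner_rep[OF x] compH_subset unfolding compH'_def proj_def by auto
  next
    case False
    then have "x \<in> new_verts" "emb x = x + vshift" using assms unfolding new_verts_def emb_def by auto
    then show ?thesis using shifted_vert_notin_H unfolding compH'_def proj_def by auto
  qed
  then show "emb x \<in> compH'" "proj (emb x) = x" by auto
qed

lemma inj_on_emb: "inj_on emb compG'"
  by (rule inj_on_inverseI[where g = proj]) (rule emb_compG'(2))

lemma proj_compH':
  assumes "y \<in> compH'"
  shows "proj y \<in> compG'" and "y \<in> verts H \<Longrightarrow> proj y = owner y \<and> owner y \<in> compG"
proof -
  show "y \<in> verts H \<Longrightarrow> proj y = owner y \<and> owner y \<in> compG"
    using assms compH'_verts_H owner_in_compG unfolding proj_def by simp
  show "proj y \<in> compG'"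
  proof (cases "y \<in> verts H")
    case True then show ?thesis using assms compH'_verts_H owner_in_compG compG_subset_compG'
      unfolding proj_def by auto
  next
    case False then show ?thesis using assms compH_subset
      unfolding proj_def compH'_def new_verts_def by auto
  qed
qed

lemma new_edge:
  assumes "e \<in> new_edges"
  shows "e + eshift \<in> edges H'" and "ends H' (e + eshift) = emb ` ends G' e"
    and "l' (e + eshift) = l e + \<Delta>"
  using shifted_edge_notin_H[of e] assms unfolding H'_def l'_def by simp_all

lemma edges_H'_cases:
  assumes "g \<in> edges H'"
  obtains "g \<in> edges H" | e where "e \<in> new_edges" "g = e + eshift" "g \<notin> edges H"
  using assms shifted_edge_notin_H unfolding H'_def by auto

lemma ends_H'_H [simp]: "g \<in> edges H \<Longrightarrow> ends H' g = ends H g"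
  unfolding H'_def by simp

lemma new_edges_subset: "new_edges \<subseteq> edges G'" and ends_new_edges: "e \<in> new_edges \<Longrightarrow> ends G' e \<subseteq> compG'"
  unfolding new_edges_def by auto

lemma graph_H': "graph H'"
proof -
  have "finite new_verts" using compG'_subset graph_G' finite_subset unfolding new_verts_def graph_def
    by (metis finite_Diff)
  moreover have "finite new_edges" using new_edges_subset graph_G' finite_subset unfolding graph_def by blast
  ultimately have "finite (verts H')" "finite (edges H')" using graph_H unfolding H'_def graph_def by auto
  moreover have "ends H' g \<subseteq> verts H' \<and> card (ends H' g) = 2" if g: "g \<in> edges H'" for g
    using g
  proof (cases rule: edges_H'_cases)
    case 1
    then show ?thesis using graph_H unfolding graph_def H'_def by auto
  next
    case (2 e)
    have "card (ends G' e) = 2" using 2(1) new_edges_subset graph_G' unfolding graph_def by blast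
    moreover have "card (emb ` ends G' e) = card (ends G' e)"
      using inj_on_subset[OF inj_on_emb ends_new_edges[OF 2(1)]] by (rule card_image)
    moreover have "emb ` ends G' e \<subseteq> verts H'"
      using emb_compG'(1) ends_new_edges[OF 2(1)] compH'_subset by blast
    ultimately show ?thesis using new_edge(2)[OF 2(1)] 2(2) by simp
  qed
  ultimately show ?thesis unfolding graph_def by blast
qed

lemma subgraph_H_H': "subgraph H H'"
  using graph_H unfolding subgraph_def H'_def by auto

lemma l'_pos_H: "g \<in> edges H \<Longrightarrow> 0 < l' g"
  unfolding l'_def using sdG_nonneg delta_pos by (simp add: add_nonneg_pos)

lemma length_l': "length_function H' l'"
  unfolding length_function_def
proof
  fix g assume "g \<in> edges H'"
  then show "0 < l' g"
  proof (cases rule: edges_H'_cases)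
    case (2 e)
    have "0 < l e" using length_l new_edges_subset 2(1) unfolding length_function_def by blast
    then show ?thesis using new_edge(3)[OF 2(1)] 2(2) Delta_nonneg by simp
  qed (rule l'_pos_H)
qed

lemma nonneg_l': "\<forall>g\<in>edges H'. 0 \<le> l' g"
  using length_l' unfolding length_function_def by (simp add: less_imp_le)

lemma nonneg_l'_H: "\<forall>g\<in>edges H. 0 \<le> l' g"
  using l'_pos_H by (simp add: less_imp_le)

lemma adj_closed_compH': "adj_closed H' compH'"
  unfolding adj_closed_def
proof (intro allI impI)
  fix u w assume u: "u \<in> compH'" and "adj H' u w"
  then obtain g where g: "g \<in> edges H'" "ends H' g = {u, w}" unfolding adj_def by blast
  from g(1) show "w \<in> compH'"
  proof (cases rule: edges_H'_cases)
    case 1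
    then have "adj H u w" using g(2) unfolding adj_def by auto
    moreover have "u \<in> compH" using u 1 g(2) graph_H compH'_verts_H unfolding graph_def by auto
    ultimately show ?thesis using adj_closed_compH unfolding adj_closed_def compH'_def by blast
  next
    case (2 e)
    then have "ends H' g \<subseteq> compH'"
      using new_edge(2)[OF 2(1)] emb_compG'(1) ends_new_edges[OF 2(1)] by auto
    then show ?thesis using g(2) by blast
  qed
qed

lemma l'_cell_edge: "v \<in> compG \<Longrightarrow> g \<in> cell_edges v \<Longrightarrow> l' g = \<delta>"
proof -
  assume v: "v \<in> compG" and g: "g \<in> cell_edges v"
  have gH: "g \<in> edges H" and sub: "ends H g \<subseteq> cell v" using g unfolding cell_edges_def by auto
  have "ends H g \<noteq> {}" using gH graph_H unfolding graph_def by fastforce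
  then have "owner ` ends H g = {v}" using owner_eq[OF v] sub by auto
  moreover have "ends H g \<subseteq> compH" using sub cell_subset_compH[OF v] by blast
  ultimately show ?thesis using gH sdG_singleton[OF v] unfolding l'_def by simp
qed

lemma sum_cell_edges_le: "v \<in> compG \<Longrightarrow> sum l' (cell_edges v) \<le> \<delta> * card (edges H)"
proof -
  assume v: "v \<in> compG"
  have "sum l' (cell_edges v) = \<delta> * card (cell_edges v)" using l'_cell_edge[OF v] by simp
  moreover have "card (cell_edges v) \<le> card (edges H)"
    using graph_H unfolding cell_edges_def graph_def by (simp add: card_mono)
  ultimately show ?thesis using delta_pos by simp
qed

lemma sum_edge_piece_le:
  assumes e: "e \<in> edges G" "ends G e \<subseteq> compG"
  shows "sum l' (edge_piece_edges e) \<le> l e + (\<delta> + 2 * \<delta> * card (edges H))"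
proof -
  have fe: "f e \<in> edges H" using branch_edge[OF e(1)] by blast
  have "l' (f e) = sdG (ends G e) + \<delta>"
    using fe edge_piece(3,4)[OF e] unfolding l'_def by simp
  then have fe_le: "l' (f e) \<le> l e + \<delta>" using sdG_ends_le[OF e] by simp
  have card: "card (ends G e) = 2" using graph_G e(1) unfolding graph_def by auto
  then have fin: "finite (ends G e)" by (metis card.infinite zero_neq_numeral)
  have "\<forall>g\<in>(\<Union>v\<in>ends G e. cell_edges v). 0 \<le> l' g"
    using nonneg_l'_H unfolding cell_edges_def by blast
  then have "sum l' (\<Union>v\<in>ends G e. cell_edges v) \<le> (\<Sum>v\<in>ends G e. sum l' (cell_edges v))"
    using fin finite_cell_edges by (intro sum_UN_le) auto
  also have "\<dots> \<le> card (ends G e) * (\<delta> * card (edges H))"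
    using sum_cell_edges_le e(2) by (intro sum_bounded_above) blast
  finally have cells_le: "sum l' (\<Union>v\<in>ends G e. cell_edges v) \<le> 2 * (\<delta> * card (edges H))"
    using card by simp
  have "sum l' (edge_piece_edges e) \<le> l' (f e) + sum l' (\<Union>v\<in>ends G e. cell_edges v)"
    unfolding edge_piece_edges_def using finite_cell_edges fin nonneg_l'_H fe
    by (simp add: sum.insert_if)
  then show ?thesis using fe_le cells_le by linarith
qed

lemma lift_to_H:
  assumes T: "connected_in G VT ET" "VT \<subseteq> compG"
  shows "\<exists>LV LE. connected_in H LV LE \<and> (\<Union>v\<in>VT. cell v) \<subseteq> LV \<and> sum l' LE \<le> sum l ET + \<Delta>"
proof -
  have fin: "finite VT" "finite ET" using connected_in_finite[OF graph_G T(1)] by auto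
  have ET: "ET \<subseteq> edges G" "\<forall>e\<in>ET. ends G e \<subseteq> compG"
    using T unfolding connected_in_def by (blast, blast)
  have R: "\<forall>x\<in>VT. connected_in H (cell x) (cell_edges x) \<and> rep x \<in> cell x"
    using connected_in_cell rep_in_cell T(2) by blast
  have Q: "\<forall>e\<in>ET. connected_in H (edge_piece_verts e) (edge_piece_edges e) \<and>
      rep ` ends G e \<subseteq> edge_piece_verts e"
    using edge_piece(1,2) ET by blast
  let ?LV = "(\<Union>x\<in>VT. cell x) \<union> (\<Union>e\<in>ET. edge_piece_verts e)"
  let ?LE = "(\<Union>x\<in>VT. cell_edges x) \<union> (\<Union>e\<in>ET. edge_piece_edges e)"
  have "sum l' ?LE \<le> (\<Sum>x\<in>VT. sum l' (cell_edges x)) + (\<Sum>e\<in>ET. sum l' (edge_piece_edges e))"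
    using R Q by (intro sum_glue_le[OF graph_H fin nonneg_l'_H]) auto
  also have "\<dots> \<le> sum l ET + (card (verts G) * (\<delta> * card (edges H)) +
      card (edges G) * (\<delta> + 2 * \<delta> * card (edges H)))"
  proof (rule sum_pieces_le[OF fin(1) _ _ _ fin(2)])
    show "card VT \<le> card (verts G)" using T(2) compG_subset graph_G card_mono unfolding graph_def
      by (metis subset_trans)
    show "card ET \<le> card (edges G)" using ET(1) graph_G card_mono unfolding graph_def by metis
    show "\<forall>x\<in>VT. sum l' (cell_edges x) \<le> \<delta> * card (edges H)" using sum_cell_edges_le T(2) by blast
    show "\<forall>e\<in>ET. sum l' (edge_piece_edges e) \<le> l e + (\<delta> + 2 * \<delta> * card (edges H))"
      using sum_edge_piece_le ET by blast
  qed (use delta_pos in auto)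
  also have "\<dots> = sum l ET + \<Delta>" unfolding \<Delta>_def lift_cost_def by (simp add: algebra_simps)
  finally have "sum l' ?LE \<le> sum l ET + \<Delta>" .
  moreover have "connected_in H ?LV ?LE" by (rule connected_in_glue[OF graph_G T(1) R Q])
  moreover have "(\<Union>v\<in>VT. cell v) \<subseteq> ?LV" by blast
  ultimately show ?thesis by blast
qed

lemma steiner_piece_of_edge:
  assumes "g \<in> edges H" "ends H g \<subseteq> compH"
  defines "X \<equiv> owner ` ends H g"
  shows "connected_in G (fst (steiner_piece X)) (snd (steiner_piece X))"
    and "X \<subseteq> fst (steiner_piece X)" and "sum l (snd (steiner_piece X)) + \<delta> = l' g"
proof -
  have "X \<subseteq> compG" unfolding X_def using assms(2) owner_in_compG by blast
  then show "connected_in G (fst (steiner_piece X)) (snd (steiner_piece X))"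
    and "X \<subseteq> fst (steiner_piece X)" and "sum l (snd (steiner_piece X)) + \<delta> = l' g"
    using steiner_piece[of X] assms(1,2) unfolding l'_def X_def by auto
qed

lemma sd_G_le_sd_H:
  assumes A0: "A0 \<subseteq> compG"
  shows "sd G l A0 \<le> sd H l' (rep ` A0)"
proof (rule sd_greatest)
  fix V E assume VE: "connected_in H V E" and AV: "rep ` A0 \<subseteq> V"
  have E: "E \<subseteq> edges H" using VE unfolding connected_in_def by blast
  show "sd G l A0 \<le> ereal (sum l' E)"
  proof (cases "A0 = {}")
    case True
    have "0 \<le> sum l' E" using nonneg_l'_H E by (intro sum_nonneg) blast
    then show ?thesis using True sd_empty[OF graph_G nonneg_l_G] by simp
  next
    case False
    then obtain a where a: "a \<in> A0" by blast
    have "rep a \<in> V" "rep a \<in> compH" using AV a rep_in_compH A0 by blast+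
    then have V: "V \<subseteq> compH" by (rule connected_in_subset_adj_closed[OF VE adj_closed_compH])
    have ends: "ends H g \<subseteq> compH" if "g \<in> E" for g using VE V that unfolding connected_in_def by blast
    let ?QV = "\<lambda>g. fst (steiner_piece (owner ` ends H g))"
    let ?QE = "\<lambda>g. snd (steiner_piece (owner ` ends H g))"
    have R: "\<forall>y\<in>V. connected_in G {owner y} {} \<and> owner y \<in> {owner y}"
    proof
      fix y assume "y \<in> V"
      then have "owner y \<in> verts G" using V owner_in_compG compG_subset by blast
      then show "connected_in G {owner y} {} \<and> owner y \<in> {owner y}" by (simp add: connected_in_singleton)
    qed
    have Q: "\<forall>g\<in>E. connected_in G (?QV g) (?QE g) \<and> owner ` ends H g \<subseteq> ?QV g"
      using steiner_piece_of_edge(1,2) E ends by blast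
    have fin: "finite V" "finite E" using connected_in_finite[OF graph_H VE] by auto
    have "A0 \<subseteq> (\<Union>y\<in>V. {owner y})"
    proof
      fix x assume "x \<in> A0"
      then have "rep x \<in> V" "owner (rep x) = x" using AV owner_rep A0 by auto
      then show "x \<in> (\<Union>y\<in>V. {owner y})" by blast
    qed
    then have "A0 \<subseteq> (\<Union>y\<in>V. {owner y}) \<union> (\<Union>g\<in>E. ?QV g)" by blast
    then have "sd G l A0 \<le> ereal (sum l ((\<Union>y\<in>V. {}) \<union> (\<Union>g\<in>E. ?QE g)))"
      by (rule sd_le_connected_in[OF graph_G connected_in_glue[OF graph_H VE R Q]])
    also have "\<dots> \<le> ereal ((\<Sum>y\<in>V. sum l {}) + (\<Sum>g\<in>E. sum l (?QE g)))"
      using sum_glue_le[OF graph_G fin nonneg_l_G, of "\<lambda>y. {owner y}" "\<lambda>_. {}" ?QV ?QE] R Q by auto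
    also have "\<dots> \<le> ereal (sum l' E)"
    proof (simp, rule sum_mono)
      fix g assume "g \<in> E"
      then show "sum l (?QE g) \<le> l' g" using steiner_piece_of_edge(3) E ends delta_pos by force
    qed
    finally show ?thesis .
  qed
qed

definition "back_verts g =
  (if g \<in> edges H then fst (steiner_piece (owner ` ends H g)) else ends G' (g - eshift))"
definition "back_edges g =
  (if g \<in> edges H then snd (steiner_piece (owner ` ends H g)) else {g - eshift})"

lemma back_piece:
  assumes g: "g \<in> edges H'" "ends H' g \<subseteq> compH'"
  shows "connected_in G' (back_verts g) (back_edges g) \<and> proj ` ends H' g \<subseteq> back_verts g \<and>
    sum l (back_edges g) + (if g \<in> edges H then 0 else \<Delta>) \<le> l' g"
  using g(1)
proof (cases rule: edges_H'_cases)
  case 1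
  have "ends H g \<subseteq> verts H" using graph_H 1 unfolding graph_def by blast
  then have sub: "ends H g \<subseteq> compH" using g(2) 1 compH'_verts_H by auto
  then have "proj ` ends H' g = owner ` ends H g"
    using 1 compH_subset unfolding proj_def by (auto simp: image_def)
  then show ?thesis
    using steiner_piece_of_edge[OF 1 sub] connected_in_supergraph[OF subgraph_G] 1 delta_pos
    unfolding back_verts_def back_edges_def by auto
next
  case (2 e)
  have "e \<in> edges G'" "ends G' e \<subseteq> compG'" using 2(1) new_edges_subset ends_new_edges by auto
  moreover have "proj ` emb ` ends G' e = ends G' e"
    using emb_compG'(2) \<open>ends G' e \<subseteq> compG'\<close> by (force simp: image_image)
  ultimately show ?thesis using connected_in_edge[OF graph_G'] new_edge[OF 2(1)] 2(2,3)
    unfolding back_verts_def back_edges_def by simp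
qed

lemma project_to_G':
  assumes VE: "connected_in H' V E" and V: "V \<subseteq> compH'" and g0: "g0 \<in> E" "g0 \<notin> edges H"
  shows "\<exists>PV PE. connected_in G' PV PE \<and> proj ` V \<subseteq> PV \<and> sum l PE + \<Delta> \<le> sum l' E"
proof -
  have E: "E \<subseteq> edges H'" and ends: "\<forall>g\<in>E. ends H' g \<subseteq> compH'"
    using VE V unfolding connected_in_def by (blast, blast)
  have fin: "finite V" "finite E" using connected_in_finite[OF graph_H' VE] by auto
  have R: "\<forall>y\<in>V. connected_in G' {proj y} {} \<and> proj y \<in> {proj y}"
    using V proj_compH'(1) compG'_subset by (auto intro: connected_in_singleton)
  have Q: "\<forall>g\<in>E. connected_in G' (back_verts g) (back_edges g) \<and> proj ` ends H' g \<subseteq> back_verts g"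
    using back_piece E ends by blast
  let ?excess = "\<lambda>g. if g \<in> edges H then 0 else \<Delta>"
  have "sum l ((\<Union>y\<in>V. {}) \<union> (\<Union>g\<in>E. back_edges g)) \<le> (\<Sum>g\<in>E. sum l (back_edges g))"
    using sum_glue_le[OF graph_G' fin nonneg_l, of "\<lambda>y. {proj y}" "\<lambda>_. {}" back_verts back_edges] R Q
    by auto
  moreover have "\<Delta> \<le> sum ?excess E"
    using member_le_sum[OF g0(1), of ?excess] g0(2) Delta_nonneg fin(2) by simp
  moreover have "(\<Sum>g\<in>E. sum l (back_edges g)) + sum ?excess E \<le> sum l' E"
    unfolding sum.distrib[symmetric] using back_piece E ends by (intro sum_mono) blast
  moreover have "proj ` V \<subseteq> (\<Union>y\<in>V. {proj y}) \<union> (\<Union>g\<in>E. back_verts g)" by blast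
  ultimately show ?thesis using connected_in_glue[OF graph_H' VE R Q] by fastforce
qed

lemma sd_H_le_via_G':
  assumes A: "A \<subseteq> compH" "card A \<le> k" and P: "connected_in G' PV PE" "proj ` A \<subseteq> PV"
  shows "sd H l' A \<le> ereal (sum l PE + \<Delta>)"
proof (cases "A = {}")
  case True
  have "0 \<le> sum l PE" using nonneg_l P(1) unfolding connected_in_def by (intro sum_nonneg) blast
  then show ?thesis using True sd_empty[OF graph_H nonneg_l'_H] Delta_nonneg by simp
next
  case False
  then obtain a where a: "a \<in> A" by blast
  define X where "X = owner ` A"
  have "proj ` A = X" using A(1) compH_subset unfolding proj_def X_def by (auto simp: image_def)
  have X: "X \<subseteq> compG" using A(1) owner_in_compG unfolding X_def by blast
  have "A \<subseteq> verts H" using A(1) compH_subset by blast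
  then have "finite A" by (rule finite_subset) (use graph_H in \<open>simp add: graph_def\<close>)
  then have "card X \<le> k" using A(2) card_image_le unfolding X_def by (metis le_trans)
  moreover have "X \<subseteq> verts G" using X compG_subset by blast
  ultimately have "sd G l X = sd G' l X" using geodesic unfolding k_geodesic_def by blast
  also have "\<dots> \<le> ereal (sum l PE)"
    using P(2) \<open>proj ` A = X\<close> by (intro sd_le_connected_in[OF graph_G' P(1)]) simp
  finally have le: "sdG X \<le> sum l PE" using sd_G_eq_sdG[OF X] by simp
  define VT ET where "VT = fst (steiner_piece X)" and "ET = snd (steiner_piece X)"
  have T: "connected_in G VT ET" "X \<subseteq> VT" "sum l ET = sdG X"
    using steiner_piece[OF X] unfolding VT_def ET_def by auto
  have "owner a \<in> VT" "owner a \<in> compG" using T(2) X a unfolding X_def by auto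
  then have "VT \<subseteq> compG" by (rule connected_in_subset_adj_closed[OF T(1) adj_closed_compG])
  then obtain LV LE where L: "connected_in H LV LE" "(\<Union>v\<in>VT. cell v) \<subseteq> LV" "sum l' LE \<le> sum l ET + \<Delta>"
    using lift_to_H[OF T(1)] by blast
  have "A \<subseteq> LV"
  proof
    fix y assume "y \<in> A"
    then have "y \<in> cell (owner y)" "owner y \<in> VT" using A(1) in_cell_owner T(2) unfolding X_def by auto
    then show "y \<in> LV" using L(2) by blast
  qed
  then have "sd H l' A \<le> ereal (sum l' LE)" by (rule sd_le_connected_in[OF graph_H L(1)])
  also have "\<dots> \<le> ereal (sum l PE + \<Delta>)" using L(3) T(3) le by simp
  finally show ?thesis .
qed

lemma sd_H_le_using_new_edge:
  assumes VE: "connected_in H' V E" and A: "A \<subseteq> V" "A \<subseteq> verts H" "card A \<le> k"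
    and g0: "g0 \<in> E" "g0 \<notin> edges H"
  shows "sd H l' A \<le> ereal (sum l' E)"
proof -
  have "g0 \<in> edges H'" using VE g0(1) unfolding connected_in_def by blast
  then obtain e0 where e0: "e0 \<in> new_edges" "g0 = e0 + eshift"
    using g0(2) by (cases rule: edges_H'_cases) auto
  have "ends H' g0 \<subseteq> compH'"
    using new_edge(2)[OF e0(1)] e0(2) emb_compG'(1) ends_new_edges[OF e0(1)] by auto
  moreover have "ends H' g0 \<noteq> {}" using graph_H' \<open>g0 \<in> edges H'\<close> unfolding graph_def by fastforce
  moreover have "ends H' g0 \<subseteq> V" using VE g0(1) unfolding connected_in_def by blast
  ultimately obtain x where "x \<in> V" "x \<in> compH'" by blast
  then have "V \<subseteq> compH'" by (rule connected_in_subset_adj_closed[OF VE adj_closed_compH'])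
  then have "A \<subseteq> compH" using A(1,2) compH'_verts_H by blast
  obtain PV PE where P: "connected_in G' PV PE" "proj ` V \<subseteq> PV" "sum l PE + \<Delta> \<le> sum l' E"
    using project_to_G'[OF VE \<open>V \<subseteq> compH'\<close> g0] by blast
  have "proj ` A \<subseteq> PV" using P(2) A(1) by blast
  then have "sd H l' A \<le> ereal (sum l PE + \<Delta>)" by (rule sd_H_le_via_G'[OF \<open>A \<subseteq> compH\<close> A(3) P(1)])
  also have "\<dots> \<le> ereal (sum l' E)" using P(3) by simp
  finally show ?thesis .
qed

lemma geodesic_H_in_H': "k_geodesic k H' l' H"
  unfolding k_geodesic_def
proof (intro allI impI, elim conjE)
  fix A assume AH: "A \<subseteq> verts H" and cA: "card A \<le> k"
  have "sd H l' A \<le> sd H' l' A"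
  proof (rule sd_greatest)
    fix V E assume VE: "connected_in H' V E" and AV: "A \<subseteq> V"
    show "sd H l' A \<le> ereal (sum l' E)"
    proof (cases "E \<subseteq> edges H")
      case True
      show ?thesis
      proof (cases "A = {}")
        case True
        have "0 \<le> sum l' E" using nonneg_l' VE unfolding connected_in_def by (intro sum_nonneg) blast
        then show ?thesis using True sd_empty[OF graph_H nonneg_l'_H] by simp
      next
        case False
        then obtain a where "a \<in> A" by blast
        then have "connected_in H V E"
          using connected_in_subgraph_of_edges[OF VE subgraph_H_H' \<open>E \<subseteq> edges H\<close>] AV AH by blast
        then show ?thesis by (rule sd_le_connected_in[OF graph_H _ AV])
      qed
    next
      case False
      then obtain g0 where "g0 \<in> E" "g0 \<notin> edges H" by blast
      then show ?thesis by (rule sd_H_le_using_new_edge[OF VE AV AH cA])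
    qed
  qed
  then show "sd H l' A = sd H' l' A"
    using sd_supergraph_le[OF graph_H' subgraph_H_H'] by (rule antisym)
qed

definition "vert_piece_verts x = (if x \<in> verts G then cell x else {x + vshift})"
definition "vert_piece_edges x = (if x \<in> verts G then cell_edges x else {})"
definition "edge_piece'_verts e = (if e \<in> edges G then edge_piece_verts e else ends H' (e + eshift))"
definition "edge_piece'_edges e = (if e \<in> edges G then edge_piece_edges e else {e + eshift})"

lemma vert_piece:
  assumes "x \<in> compG'"
  shows "connected_in H' (vert_piece_verts x) (vert_piece_edges x) \<and> emb x \<in> vert_piece_verts x \<and>
    sum l' (vert_piece_edges x) \<le> \<delta> * card (edges H)"
proof (cases "x \<in> verts G")
  case True
  then have "x \<in> compG" using compG'_verts_G assms by blast
  then show ?thesis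
    using connected_in_supergraph[OF subgraph_H_H' connected_in_cell] rep_in_cell sum_cell_edges_le True
    unfolding vert_piece_verts_def vert_piece_edges_def emb_def by simp
next
  case False
  then have "x + vshift \<in> verts H'" using assms unfolding H'_def new_verts_def by simp
  then show ?thesis using connected_in_singleton[of "x + vshift" H'] False delta_pos
    unfolding vert_piece_verts_def vert_piece_edges_def emb_def by simp
qed

lemma edge_piece':
  assumes e: "e \<in> edges G'" "ends G' e \<subseteq> compG'"
  shows "connected_in H' (edge_piece'_verts e) (edge_piece'_edges e) \<and>
    emb ` ends G' e \<subseteq> edge_piece'_verts e \<and>
    sum l' (edge_piece'_edges e) \<le> l e + (\<Delta> + \<delta> + 2 * \<delta> * card (edges H))"
proof (cases "e \<in> edges G")
  case True
  have eq: "ends G' e = ends G e" using subgraph_G True unfolding subgraph_def by auto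
  have "ends G e \<subseteq> verts G" using graph_G True unfolding graph_def by blast
  then have sub: "ends G e \<subseteq> compG" using compG'_verts_G e(2) eq by blast
  have "emb ` ends G' e = rep ` ends G e" using eq \<open>ends G e \<subseteq> verts G\<close> unfolding emb_def by auto
  then show ?thesis
    using edge_piece(1,2)[OF True sub] sum_edge_piece_le[OF True sub] Delta_nonneg True
      connected_in_supergraph[OF subgraph_H_H']
    unfolding edge_piece'_verts_def edge_piece'_edges_def by auto
next
  case False
  then have ne: "e \<in> new_edges" using e unfolding new_edges_def by blast
  then show ?thesis
    using connected_in_edge[OF graph_H' new_edge(1)[OF ne]] new_edge(2,3)[OF ne] False delta_pos
    unfolding edge_piece'_verts_def edge_piece'_edges_def by simp
qed

lemma lift_to_H':
  assumes T: "connected_in G' VT ET" "VT \<subseteq> compG'"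
  shows "\<exists>LV LE. connected_in H' LV LE \<and> emb ` VT \<subseteq> LV \<and> sum l' LE \<le> sum l ET + \<delta> * total_cost"
proof -
  have fin: "finite VT" "finite ET" using connected_in_finite[OF graph_G' T(1)] by auto
  have ET: "ET \<subseteq> edges G'" "\<forall>e\<in>ET. ends G' e \<subseteq> compG'"
    using T unfolding connected_in_def by (blast, blast)
  have R: "\<forall>x\<in>VT. connected_in H' (vert_piece_verts x) (vert_piece_edges x) \<and> emb x \<in> vert_piece_verts x"
    using vert_piece T(2) by blast
  have Q: "\<forall>e\<in>ET. connected_in H' (edge_piece'_verts e) (edge_piece'_edges e) \<and>
      emb ` ends G' e \<subseteq> edge_piece'_verts e"
    using edge_piece' ET by blast
  let ?LV = "(\<Union>x\<in>VT. vert_piece_verts x) \<union> (\<Union>e\<in>ET. edge_piece'_verts e)"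
  let ?LE = "(\<Union>x\<in>VT. vert_piece_edges x) \<union> (\<Union>e\<in>ET. edge_piece'_edges e)"
  have "sum l' ?LE \<le> (\<Sum>x\<in>VT. sum l' (vert_piece_edges x)) + (\<Sum>e\<in>ET. sum l' (edge_piece'_edges e))"
    using R Q by (intro sum_glue_le[OF graph_H' fin nonneg_l']) auto
  also have "\<dots> \<le> sum l ET + (card (verts G') * (\<delta> * card (edges H)) +
      card (edges G') * (\<Delta> + \<delta> + 2 * \<delta> * card (edges H)))"
  proof (rule sum_pieces_le[OF fin(1) _ _ _ fin(2)])
    show "card VT \<le> card (verts G')" using T(2) compG'_subset graph_G' card_mono unfolding graph_def
      by (metis subset_trans)
    show "card ET \<le> card (edges G')" using ET(1) graph_G' card_mono unfolding graph_def by metis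
    show "\<forall>x\<in>VT. sum l' (vert_piece_edges x) \<le> \<delta> * card (edges H)" using vert_piece T(2) by blast
    show "\<forall>e\<in>ET. sum l' (edge_piece'_edges e) \<le> l e + (\<Delta> + \<delta> + 2 * \<delta> * card (edges H))"
      using edge_piece' ET by blast
  qed (use delta_pos Delta_nonneg in auto)
  also have "\<dots> = sum l ET + \<delta> * total_cost"
    unfolding total_cost_def \<Delta>_def by (simp add: algebra_simps)
  finally have "sum l' ?LE \<le> sum l ET + \<delta> * total_cost" .
  moreover have "connected_in H' ?LV ?LE" by (rule connected_in_glue[OF graph_G' T(1) R Q])
  moreover have "emb ` VT \<subseteq> ?LV" using R by blast
  ultimately show ?thesis by blast
qed

lemma sd_G_le_perturbed:
  assumes H: "in_H k H" and A0: "A0 \<subseteq> compG"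
    and T: "connected_in G' VT ET" "A0 \<subseteq> VT" "VT \<subseteq> compG'"
  shows "sd G l A0 \<le> ereal (sum l ET + \<delta> * total_cost)"
proof -
  have "fully_geodesic H' l' H"
    using H graph_H' subgraph_H_H' length_l' geodesic_H_in_H' unfolding in_H_def by blast
  moreover have "rep ` A0 \<subseteq> verts H" using A0 rep_in_compH compH_subset by blast
  ultimately have eq: "sd H l' (rep ` A0) = sd H' l' (rep ` A0)"
    unfolding fully_geodesic_def k_geodesic_def by blast
  obtain LV LE where L: "connected_in H' LV LE" "emb ` VT \<subseteq> LV" "sum l' LE \<le> sum l ET + \<delta> * total_cost"
    using lift_to_H'[OF T(1,3)] by blast
  have "rep ` A0 = emb ` A0" using A0 compG_subset unfolding emb_def by auto
  then have "rep ` A0 \<subseteq> LV" using L(2) T(2) by blast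
  have "sd G l A0 \<le> sd H l' (rep ` A0)" by (rule sd_G_le_sd_H[OF A0])
  also have "\<dots> = sd H' l' (rep ` A0)" by (rule eq)
  also have "\<dots> \<le> ereal (sum l' LE)" by (rule sd_le_connected_in[OF graph_H' L(1) \<open>rep ` A0 \<subseteq> LV\<close>])
  also have "\<dots> \<le> ereal (sum l ET + \<delta> * total_cost)" using L(3) by simp
  finally show ?thesis .
qed

end

lemma sd_le_sd_supergraph_of_minor:
  fixes H G G' :: "(nat, nat) mgraph"
  assumes "geodesic_extension H G B f a0 k G' l" and H: "in_H k H" and A0: "A0 \<subseteq> verts G" "a0 \<in> A0"
  shows "sd G l A0 \<le> sd G' l A0"
proof -
  interpret geodesic_extension H G B f a0 k G' l by fact
  show ?thesis
  proof (cases "sd G' l A0 = \<infinity>")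
    case False
    then obtain VT ET where T: "connected_in G' VT ET" "A0 \<subseteq> VT" "sd G' l A0 = ereal (sum l ET)"
      by (rule sd_attained[OF graph_G'])
    have "a0 \<in> VT" "a0 \<in> compG'" using T(2) A0(2) root_in_compG compG_subset_compG' by auto
    then have VT: "VT \<subseteq> compG'" by (rule connected_in_subset_adj_closed[OF T(1) adj_closed_compG'])
    then have "A0 \<subseteq> compG" using T(2) A0(1) compG'_verts_G by blast
    have "sd G l A0 \<le> sd G' l A0 + ereal e" if e: "0 < e" for e
    proof -
      define \<delta> where "\<delta> = e / (total_cost + 1)"
      have "0 < \<delta>" unfolding \<delta>_def using e total_cost_nonneg by simp
      then interpret perturbed_extension H G B f a0 k G' l \<delta> by unfold_locales
      have "\<delta> * total_cost \<le> e"
        unfolding \<delta>_def using e total_cost_nonneg by (simp add: field_simps)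
      then have "ereal (sum l ET + \<delta> * total_cost) \<le> sd G' l A0 + ereal e" using T(3) by simp
      with sd_G_le_perturbed[OF H \<open>A0 \<subseteq> compG\<close> T(1,2) VT] show ?thesis by (rule order_trans)
    qed
    then show ?thesis by (rule ereal_le_epsilon2)
  qed simp
qed

theorem theorem6p1:
  fixes k :: nat and H G :: "(nat, nat) mgraph"
  assumes "k \<ge> 2" and "in_H k H" and "minor G H"
  shows "in_H k G"
proof -
  have "graph G" using assms(3) unfolding minor_def by blast
  obtain B f where model: "\<And>a0. a0 \<in> verts G \<Longrightarrow> minor_model H G B f a0"
    using assms(3) unfolding minor_def minor_model_def by blast
  have "fully_geodesic G' l G"
    if G': "graph G'" "subgraph G G'" "length_function G' l" "k_geodesic k G' l G" for G' l
  proof (rule fully_geodesicI[OF G'(1,2)])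
    fix A assume A: "A \<subseteq> verts G"
    show "sd G l A \<le> sd G' l A"
    proof (cases "A = {}")
      case False
      then obtain a0 where "a0 \<in> A" by blast
      then have "geodesic_extension H G B f a0 k G' l"
        using model A assms(1) G' by (intro geodesic_extension.intro geodesic_extension_axioms.intro) auto
      then show ?thesis using sd_le_sd_supergraph_of_minor assms(2) A \<open>a0 \<in> A\<close> by blast
    qed (simp add: sd_empty_le \<open>graph G\<close> G'(3))
  qed
  then show ?thesis using \<open>graph G\<close> unfolding in_H_def by blast
qed

end
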